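(* Let $X\subseteq\mathbb{R}^d$ be a finite set of arms with $\|x\|_2\le1$ for all $x\in X$. Let $\theta^*\in\mathbb{R}^d$ be such that $x_*=\arg\max_{x\in X}x^\top\theta^*$ is unique, and for $x\in X$ set $\Delta_x=(x_*-x)^\top\theta^*$. Then for every $L>0$, $$L\cdot\rho\big(\mathcal{Y}(\{z\in X:\Delta_z\le 15/\sqrt L\})\big)\le 900\,\psi^*.$$
   Context: For $S\subseteq X$, $\mathcal{Y}(S)=\{x-x':x,x'\in S,\ x\ne x'\}$. Let $\Delta^X=\{\lambda\in\mathbb{R}^{|X|}:\lambda\ge0,\ \sum_{x\in X}\lambda_x=1\}$, and for $\lambda\in\Delta^X$ let $A(\lambda)=\sum_{x\in X}\lambda_xxx^\top$. Write $\|y\|_M^2=y^\top My$. For a set $A\subseteq\mathbb{R}^d$, the optimal design value is $\rho(A)=\min_{\lambda\in\Delta^X}\max_{y\in A}\|y\|^2_{A(\lambda)^{-1}}$. The instance complexity is $$\psi^*=\min_{\lambda\in\Delta^X}\max_{x\in X\setminus\{x_*\}}\frac{\|x-x_*\|^2_{A(\lambda)^{-1}}}{\big((x_*-x)^\top\theta^*\big)^2}.$$ *)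

theory Defs
  imports "HOL-Analysis.Analysis"
begin

definition diffset :: "(real^'d) set \<Rightarrow> (real^'d) set" where
  "diffset S = {x - x' | x x'. x \<in> S \<and> x' \<in> S \<and> x \<noteq> x'}"

text \<open>The design_simplex over the finite arm set X (weights indexed by arms; values off X are irrelevant).\<close>
definition design_simplex :: "(real^'d) set \<Rightarrow> ((real^'d) \<Rightarrow> real) set" where
  "design_simplex X = {lam. (\<forall>x\<in>X. 0 \<le> lam x) \<and> (\<Sum>x\<in>X. lam x) = 1}"

definition outer :: "real^'d \<Rightarrow> real^'d^'d" where
  "outer x = (\<chi> i j. x $ i * x $ j)"

definition design :: "(real^'d) set \<Rightarrow> ((real^'d) \<Rightarrow> real) \<Rightarrow> real^'d^'d" where
  "design X lam = (\<Sum>x\<in>X. lam x *\<^sub>R outer x)"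

text \<open>||y||^2_{A^{-1}}, defined variationally as sup_u (2 u.y - u^T A u).
  For invertible positive definite A this equals y^T A^{-1} y; for singular PSD A it is
  y^T A^+ y if y is in the range of A and +infinity otherwise.\<close>
definition invnorm2 :: "real^'d^'d \<Rightarrow> real^'d \<Rightarrow> ereal" where
  "invnorm2 A y = (SUP u. ereal (2 * (u \<bullet> y) - u \<bullet> (A *v u)))"

definition rho :: "(real^'d) set \<Rightarrow> (real^'d) set \<Rightarrow> ereal" where
  "rho X B = (INF lam\<in>design_simplex X. SUP y\<in>B. invnorm2 (design X lam) y)"

definition psi_star :: "(real^'d) set \<Rightarrow> real^'d \<Rightarrow> real^'d \<Rightarrow> ereal" where
  "psi_star X \<theta> xs = (INF lam\<in>design_simplex X. SUP x\<in>X - {xs}.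
      invnorm2 (design X lam) (x - xs) / ereal (((xs - x) \<bullet> \<theta>)\<^sup>2))"

end

theory Submission
  imports Defs
begin

text \<open>A nearly optimal arm z, i.e. one with gap Delta_z <= eps, satisfies
  ||z - x_*||^2 <= Delta_z^2 psi(lam) <= eps^2 psi(lam) for every design lam, where psi(lam) is
  the objective minimised in psi^*. A difference z - z' of two such arms is
  (z - x_*) - (z' - x_*), and ||a + b||^2 <= 2||a||^2 + 2||b||^2 bounds its norm by
  4 eps^2 psi(lam). For eps = 15 / sqrt L this is 900 psi(lam) / L; minimising over lam gives
  the claim. Only the variational definition of the norm ||.||_{A^{-1}} is used, so the design
  matrix need not be invertible.\<close>

lemma invnorm2_nonneg: "0 \<le> invnorm2 A y"
  unfolding invnorm2_def by (rule order_trans[OF _ SUP_upper[of 0]]) auto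

lemma invnorm2_uminus: "invnorm2 A (- y) = invnorm2 A y"
proof -
  have reindex: "(SUP u. f (- u)) = (SUP u. f u)" for f :: "real^'n \<Rightarrow> ereal"
    by (metis image_image minus_minus surj_def)
  have "A *v - u = - (A *v u)" for u
    using matrix_vector_mult_diff_distrib[of A 0 u] by simp
  then have "invnorm2 A (- y) = (SUP u. ereal (2 * (- u \<bullet> y) - - u \<bullet> (A *v - u)))"
    unfolding invnorm2_def by simp
  also have "\<dots> = invnorm2 A y"
    unfolding invnorm2_def by (rule reindex)
  finally show ?thesis .
qed

lemma invnorm2_add_le:
  fixes A :: "real^'n^'n"
  shows "invnorm2 A (a + b) \<le> 2 * invnorm2 A a + 2 * invnorm2 A b"
  unfolding invnorm2_def
proof (rule SUP_least)
  fix u :: "real^'n"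
  define v where "v = (1/2) *\<^sub>R u"
  have "ereal (2 * (u \<bullet> (a + b)) - u \<bullet> (A *v u)) =
        2 * ereal (2 * (v \<bullet> a) - v \<bullet> (A *v v)) + 2 * ereal (2 * (v \<bullet> b) - v \<bullet> (A *v v))"
    by (simp add: v_def inner_add_right matrix_vector_mult_scaleR algebra_simps)
  also have "\<dots> \<le> 2 * (SUP u. ereal (2 * (u \<bullet> a) - u \<bullet> (A *v u)))
                  + 2 * (SUP u. ereal (2 * (u \<bullet> b) - u \<bullet> (A *v u)))"
    by (intro add_mono ereal_mult_left_mono SUP_upper) auto
  finally show "ereal (2 * (u \<bullet> (a + b)) - u \<bullet> (A *v u)) \<le> \<dots>" .
qed

lemma invnorm2_diffset_le:
  assumes bound: "\<forall>z\<in>S - {x0}. invnorm2 A (z - x0) \<le> c"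
    and "y \<in> diffset S"
  shows "invnorm2 A y \<le> 4 * c"
proof -
  obtain z z' where y: "y = z - z'" "z \<in> S" "z' \<in> S" "z \<noteq> z'"
    using \<open>y \<in> diffset S\<close> unfolding diffset_def by auto
  have "0 \<le> c"
    using bound y invnorm2_nonneg order_trans by (metis Diff_iff singletonD)
  then have c_le: "c \<le> 4 * c"
    by (cases c) auto
  consider "z' = x0" | "z = x0" | "z \<noteq> x0" "z' \<noteq> x0"
    by blast
  then show ?thesis
  proof cases
    case 1
    then show ?thesis using bound y c_le by (auto intro: order_trans)
  next
    case 2
    then have "invnorm2 A y = invnorm2 A (z' - x0)"
      using y invnorm2_uminus[of A "z' - x0"] by simp
    then show ?thesis using bound y c_le 2 by (auto intro: order_trans)
  next
    case 3
    have "invnorm2 A y = invnorm2 A ((z - x0) + - (z' - x0))"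
      using y by simp
    also have "\<dots> \<le> 2 * invnorm2 A (z - x0) + 2 * invnorm2 A (z' - x0)"
      using invnorm2_add_le[of A "z - x0" "- (z' - x0)"] by (simp only: invnorm2_uminus)
    also have "\<dots> \<le> 2 * c + 2 * c"
      using bound y 3 by (intro add_mono ereal_mult_left_mono) auto
    also have "\<dots> = 4 * c"
      by (cases c) (auto simp: ereal_mult_infty)
    finally show ?thesis .
  qed
qed

lemma invnorm2_le_gap_ratio:
  assumes ratio: "invnorm2 A v / ereal (d\<^sup>2) \<le> G" and "d \<noteq> 0" and "d\<^sup>2 \<le> r"
  shows "invnorm2 A v \<le> ereal r * G"
proof -
  have "0 \<le> G"
    using ratio by (metis invnorm2_nonneg order_trans zero_le_divide_ereal zero_le_power2 ereal_less_eq(5))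
  have "invnorm2 A v \<le> ereal (d\<^sup>2) * G"
    using ratio \<open>d \<noteq> 0\<close> by (subst (asm) ereal_divide_le_pos) auto
  also have "\<dots> \<le> ereal r * G"
    using \<open>d\<^sup>2 \<le> r\<close> \<open>0 \<le> G\<close> by (intro ereal_mult_right_mono) auto
  finally show ?thesis .
qed

lemma SUP_invnorm2_diffset_small_gap_le:
  fixes \<theta> xs :: "real^'n" and A :: "real^'n^'n"
  assumes gaps: "\<forall>x\<in>X. x \<noteq> xs \<longrightarrow> x \<bullet> \<theta> < xs \<bullet> \<theta>"
  shows "(SUP y\<in>diffset {z\<in>X. (xs - z) \<bullet> \<theta> \<le> \<epsilon>}. invnorm2 A y)
         \<le> ereal (4 * \<epsilon>\<^sup>2) * (SUP x\<in>X - {xs}. invnorm2 A (x - xs) / ereal (((xs - x) \<bullet> \<theta>)\<^sup>2))"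
    (is "_ \<le> _ * ?G")
proof (rule SUP_least)
  fix y
  assume y: "y \<in> diffset {z\<in>X. (xs - z) \<bullet> \<theta> \<le> \<epsilon>}"
  have "invnorm2 A (z - xs) \<le> ereal (\<epsilon>\<^sup>2) * ?G"
    if z: "z \<in> {z\<in>X. (xs - z) \<bullet> \<theta> \<le> \<epsilon>} - {xs}" for z
  proof (rule invnorm2_le_gap_ratio)
    have "0 < (xs - z) \<bullet> \<theta>"
      using gaps z by (simp add: inner_diff_left)
    then show "(xs - z) \<bullet> \<theta> \<noteq> 0" and "((xs - z) \<bullet> \<theta>)\<^sup>2 \<le> \<epsilon>\<^sup>2"
      using z by (auto intro: power_mono)
    show "invnorm2 A (z - xs) / ereal (((xs - z) \<bullet> \<theta>)\<^sup>2) \<le> ?G"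
      using z by (intro SUP_upper) auto
  qed
  then have "invnorm2 A y \<le> 4 * (ereal (\<epsilon>\<^sup>2) * ?G)"
    using y by (intro invnorm2_diffset_le) auto
  moreover have "ereal (4 * \<epsilon>\<^sup>2) = 4 * ereal (\<epsilon>\<^sup>2)"
    by simp
  ultimately show "invnorm2 A y \<le> ereal (4 * \<epsilon>\<^sup>2) * ?G"
    by (simp only: mult.assoc)
qed

lemma INF_le_cmult_INF:
  fixes f g :: "'a \<Rightarrow> ereal"
  assumes "\<And>i. i \<in> I \<Longrightarrow> f i \<le> ereal c * g i" and "0 < c"
  shows "(INF i\<in>I. f i) \<le> ereal c * (INF i\<in>I. g i)"
proof -
  have "(INF i\<in>I. f i) / ereal c \<le> (INF i\<in>I. g i)"
  proof (rule INF_greatest)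
    fix i
    assume "i \<in> I"
    then have "(INF i\<in>I. f i) \<le> ereal c * g i"
      using assms(1) by (blast intro: INF_lower2)
    then show "(INF i\<in>I. f i) / ereal c \<le> g i"
      using \<open>0 < c\<close> by (subst ereal_divide_le_pos) auto
  qed
  then show ?thesis
    using \<open>0 < c\<close> by (subst (asm) ereal_divide_le_pos) auto
qed

theorem lemma1:
  fixes X :: "(real^'d) set" and \<theta> xs :: "real^'d" and L :: real
  assumes "finite X"
    and "\<forall>x\<in>X. norm x \<le> 1"
    and "xs \<in> X"
    and "\<forall>x\<in>X. x \<noteq> xs \<longrightarrow> x \<bullet> \<theta> < xs \<bullet> \<theta>"
    and "L > 0"
  shows "ereal L * rho X (diffset {z\<in>X. (xs - z) \<bullet> \<theta> \<le> 15 / sqrt L})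
         \<le> 900 * psi_star X \<theta> xs"
proof -
  have "4 * (15 / sqrt L)\<^sup>2 = 900 / L"
    using \<open>L > 0\<close> by (simp add: power_divide)
  then have "rho X (diffset {z\<in>X. (xs - z) \<bullet> \<theta> \<le> 15 / sqrt L}) \<le> ereal (900 / L) * psi_star X \<theta> xs"
    unfolding rho_def psi_star_def
    using SUP_invnorm2_diffset_small_gap_le[OF assms(4), where \<epsilon> = "15 / sqrt L"] \<open>L > 0\<close>
    by (intro INF_le_cmult_INF) auto
  then have "ereal L * rho X (diffset {z\<in>X. (xs - z) \<bullet> \<theta> \<le> 15 / sqrt L})
             \<le> ereal L * (ereal (900 / L) * psi_star X \<theta> xs)"
    using \<open>L > 0\<close> by (intro ereal_mult_left_mono) auto
  also have "\<dots> = 900 * psi_star X \<theta> xs"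
    using \<open>L > 0\<close> by (simp add: mult.assoc[symmetric])
  finally show ?thesis .
qed

end
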